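(* Let $n\ge d\ge 1$. For $k=1,\dots,n$ let $\tilde Q_k=\begin{pmatrix}\mu_k&y_k^*\\ x_k&\tilde O_k\end{pmatrix}$ be a real orthogonal $(d+1)\times(d+1)$ matrix ($\mu_k\in\mathbb{R}$, $x_k,y_k\in\mathbb{R}^d$, $\tilde O_k\in\mathbb{R}^{d\times d}$), and let $$Q^{(k)}=\mathbb{I}_{k-1}\oplus\begin{pmatrix}\mu_k&0_{1,n-k}&y_k^*\\ 0_{n-k,1}&\mathbb{I}_{n-k}&0_{n-k,d}\\ x_k&0_{d,n-k}&\tilde O_k\end{pmatrix}\in\mathbb{R}^{(n+d)\times(n+d)}.$$ Define the $d\times n$ matrix $C$ and the $n\times n$ matrix $A$ by $$\begin{pmatrix} C\\ A\end{pmatrix}=Q^{(n)}Q^{(n-1)}\cdots Q^{(1)}\begin{pmatrix}\mathbb{I}_n\\ 0_{d,n}\end{pmatrix}.$$ Then $(A,C)$ is an OTSON pair.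
   Context: ${}^*$ denotes transpose. $(A,C)$ is OTSON if $A^*A=\mathbb{I}_n-C^*C$ and the stack $Q=\begin{pmatrix} C\\ A\end{pmatrix}$ satisfies $Q_{i,j}=0$ for $j>i$. *)

theory Defs
  imports "Jordan_Normal_Form.Matrix"
begin

definition real_orthogonal :: "nat \<Rightarrow> real mat \<Rightarrow> bool" where
  "real_orthogonal m Q \<longleftrightarrow> Q \<in> carrier_mat m m \<and>
     transpose_mat Q * Q = 1\<^sub>m m \<and> Q * transpose_mat Q = 1\<^sub>m m"

definition OTSON :: "nat \<Rightarrow> nat \<Rightarrow> real mat \<Rightarrow> real mat \<Rightarrow> bool" where
  "OTSON n d A C \<longleftrightarrow> A \<in> carrier_mat n n \<and> C \<in> carrier_mat d n \<and>
     transpose_mat A * A = 1\<^sub>m n - transpose_mat C * C \<and>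
     (\<forall>i < n + d. \<forall>j < n. i < j \<longrightarrow> (C @\<^sub>r A) $$ (i, j) = 0)"

text \<open>Position inside the (d+1)x(d+1) matrix tilde Q_k of a 0-based global index p
  of the active block of Q^(k) (k is 1-based): global index k-1 corresponds to the
  first row/column (mu_k), global indices n, ..., n+d-1 to the last d rows/columns.\<close>
definition loc_idx :: "nat \<Rightarrow> nat \<Rightarrow> nat" where
  "loc_idx n p = (if p < n then 0 else p - n + 1)"

text \<open>Q^(k) = I_{k-1} (+) [[mu_k, 0, y_k^*],[0, I_{n-k}, 0],[x_k, 0, O_k]], of size n+d,
  where Qt = tilde Q_k = [[mu_k, y_k^*],[x_k, O_k]].\<close>
definition Qk :: "nat \<Rightarrow> nat \<Rightarrow> nat \<Rightarrow> real mat \<Rightarrow> real mat" where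
  "Qk n d k Qt = mat (n + d) (n + d) (\<lambda>(i, j).
     if (i = k - 1 \<or> n \<le> i) \<and> (j = k - 1 \<or> n \<le> j)
     then Qt $$ (loc_idx n i, loc_idx n j)
     else (if i = j then 1 else 0))"

fun Qprod :: "nat \<Rightarrow> nat \<Rightarrow> (nat \<Rightarrow> real mat) \<Rightarrow> nat \<Rightarrow> real mat" where
  "Qprod n d Qt 0 = 1\<^sub>m (n + d)"
| "Qprod n d Qt (Suc m) = Qk n d (Suc m) (Qt (Suc m)) * Qprod n d Qt m"

definition embed_mat :: "nat \<Rightarrow> nat \<Rightarrow> real mat" where
  "embed_mat n d = 1\<^sub>m n @\<^sub>r 0\<^sub>m d n"

definition stacked :: "nat \<Rightarrow> nat \<Rightarrow> (nat \<Rightarrow> real mat) \<Rightarrow> real mat" where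
  "stacked n d Qt = Qprod n d Qt n * embed_mat n d"

definition C_of :: "nat \<Rightarrow> nat \<Rightarrow> (nat \<Rightarrow> real mat) \<Rightarrow> real mat" where
  "C_of n d Qt = mat d n (\<lambda>(i, j). stacked n d Qt $$ (i, j))"

definition A_of :: "nat \<Rightarrow> nat \<Rightarrow> (nat \<Rightarrow> real mat) \<Rightarrow> real mat" where
  "A_of n d Qt = mat n n (\<lambda>(i, j). stacked n d Qt $$ (d + i, j))"

end

theory Submission
  imports Defs
begin

text \<open>Each factor Q(k) is orthogonal: it is the identity except on the rows and columns
  k - 1, n, ..., n + d - 1, where it is a copy of the orthogonal matrix Qt k. Hence the stacked
  matrix S = (C; A) has orthonormal columns, and S^T S = C^T C + A^T A is the Gram identity.
  For the zero pattern, Q(k) fixes the coordinate vectors e_j with j < n and j \<noteq> k - 1.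
  Row i < n is modified only by Q(i + 1); at that moment every column j > i is still e_j,
  so entry (i, j) becomes the (i, j) entry of Q(i + 1), which is 0.\<close>

lemma transpose_append_rows_mult:
  fixes A B :: "'a::comm_semiring_0 mat"
  assumes A: "A \<in> carrier_mat r1 c" and B: "B \<in> carrier_mat r2 c"
  shows "transpose_mat (A @\<^sub>r B) * (A @\<^sub>r B) = transpose_mat A * A + transpose_mat B * B"
proof -
  have AB: "A @\<^sub>r B = four_block_mat A (0\<^sub>m r1 0) B (0\<^sub>m r2 0)"
    using A B by (simp add: append_rows_def)
  have ABt: "transpose_mat (A @\<^sub>r B)
      = four_block_mat (transpose_mat A) (transpose_mat B) (0\<^sub>m 0 r1) (0\<^sub>m 0 r2)"
    unfolding AB using A B by (subst transpose_four_block_mat) auto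
  have "transpose_mat (A @\<^sub>r B) * (A @\<^sub>r B)
      = four_block_mat (transpose_mat A * A + transpose_mat B * B) (0\<^sub>m c 0) (0\<^sub>m 0 c) (0\<^sub>m 0 0)"
    using A B by (subst ABt, subst AB, subst mult_four_block_mat) auto
  also have "\<dots> = transpose_mat A * A + transpose_mat B * B"
    using A B by (intro eq_matI) auto
  finally show ?thesis .
qed

lemma transpose_mult_isometry:
  fixes P B :: "'a::comm_semiring_1 mat"
  assumes P: "P \<in> carrier_mat r N" and B: "B \<in> carrier_mat N c"
    and PP: "transpose_mat P * P = 1\<^sub>m N"
  shows "transpose_mat (P * B) * (P * B) = transpose_mat B * B"
proof -
  have "transpose_mat (P * B) * (P * B) = (transpose_mat B * transpose_mat P) * (P * B)"
    using P B by (simp add: transpose_mult)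
  also have "\<dots> = transpose_mat B * ((transpose_mat P * P) * B)"
    using P B by (simp add: assoc_mult_mat[of _ c N _ r _ c])
  also have "\<dots> = transpose_mat B * B"
    using PP B by simp
  finally show ?thesis .
qed

lemma index_transpose_mult_self:
  "M \<in> carrier_mat r c \<Longrightarrow> i < c \<Longrightarrow> j < c \<Longrightarrow>
    (transpose_mat M * M) $$ (i, j) = (\<Sum>l\<in>{0..<r}. M $$ (l, i) * M $$ (l, j))"
  by (auto simp: scalar_prod_def intro!: sum.cong)

lemma transpose_mult_self_block_embedding:
  fixes M Q :: "'a::comm_ring_1 mat"
  assumes M: "M \<in> carrier_mat N N" and Q: "Q \<in> carrier_mat m m"
    and QQ: "transpose_mat Q * Q = 1\<^sub>m m"
    and B: "B \<subseteq> {0..<N}" and f: "bij_betw f B {0..<m}"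
    and block: "\<And>i j. i \<in> B \<Longrightarrow> j \<in> B \<Longrightarrow> M $$ (i, j) = Q $$ (f i, f j)"
    and off_block: "\<And>i j. i < N \<Longrightarrow> j < N \<Longrightarrow> i \<notin> B \<or> j \<notin> B \<Longrightarrow>
      M $$ (i, j) = (if i = j then 1 else 0)"
  shows "transpose_mat M * M = 1\<^sub>m N"
proof (rule eq_matI)
  fix i j
  assume "i < dim_row (1\<^sub>m N)" and "j < dim_col (1\<^sub>m N)"
  then have i: "i < N" and j: "j < N" by auto
  have "(\<Sum>l\<in>{0..<N}. M $$ (l, i) * M $$ (l, j)) = (if i = j then 1 else 0)"
  proof (cases "i \<in> B \<and> j \<in> B")
    case False
    then consider "i \<notin> B" | "j \<notin> B" by blast
    then show ?thesis
    proof cases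
      case 1
      have "(\<Sum>l\<in>{0..<N}. M $$ (l, i) * M $$ (l, j))
          = (\<Sum>l\<in>{0..<N}. if l = i then M $$ (i, j) else 0)"
        using i off_block 1 by (intro sum.cong) auto
      then show ?thesis using i j off_block 1 by simp
    next
      case 2
      have "(\<Sum>l\<in>{0..<N}. M $$ (l, i) * M $$ (l, j))
          = (\<Sum>l\<in>{0..<N}. if l = j then M $$ (j, i) else 0)"
        using j off_block 2 by (intro sum.cong) auto
      then show ?thesis using i j off_block 2 by simp
    qed
  next
    case True
    have "(\<Sum>l\<in>{0..<N}. M $$ (l, i) * M $$ (l, j)) = (\<Sum>l\<in>B. M $$ (l, i) * M $$ (l, j))"
      using B True off_block by (intro sum.mono_neutral_right) auto
    also have "\<dots> = (\<Sum>l\<in>B. Q $$ (f l, f i) * Q $$ (f l, f j))"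
      using True block by simp
    also have "\<dots> = (\<Sum>p\<in>{0..<m}. Q $$ (p, f i) * Q $$ (p, f j))"
      by (rule sum.reindex_bij_betw[OF f])
    also have "\<dots> = (transpose_mat Q * Q) $$ (f i, f j)"
      using True bij_betwE[OF f] by (intro index_transpose_mult_self[OF Q, symmetric]) auto
    also have "\<dots> = (if i = j then 1 else 0)"
      using QQ True f bij_betwE[OF f] by (auto simp: bij_betw_def inj_on_eq_iff)
    finally show ?thesis .
  qed
  then show "(transpose_mat M * M) $$ (i, j) = 1\<^sub>m N $$ (i, j)"
    using i j by (simp add: index_transpose_mult_self[OF M])
qed (use M in auto)

lemma index_mult_unit_row:
  fixes A B :: "'a::semiring_1 mat"
  assumes "A \<in> carrier_mat N N" "B \<in> carrier_mat N c" "i < N" "j < c"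
    and "row A i = unit_vec N i"
  shows "(A * B) $$ (i, j) = B $$ (i, j)"
proof -
  have "col B j \<in> carrier_vec N" using assms(2,4) by simp
  then show ?thesis using assms by simp
qed

lemma col_mult_unit_col:
  fixes A B :: "'a::semiring_1 mat"
  assumes A: "A \<in> carrier_mat r N" and B: "B \<in> carrier_mat N c" and "j < c" "j < N"
    and "col B j = unit_vec N j"
  shows "col (A * B) j = col A j"
proof (rule eq_vecI)
  fix i assume "i < dim_vec (col A j)"
  then have "i < r" using A by simp
  then show "col (A * B) j $ i = col A j $ i"
    using assms by (simp add: carrier_vecI)
qed (use A B \<open>j < c\<close> in simp)

lemma add_eq_imp_eq_minus_mat:
  fixes X Y :: "'a::ab_group_add mat"
  assumes "X \<in> carrier_mat r c" "Y \<in> carrier_mat r c" "X + Y = Z"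
  shows "Y = Z - X"
  using assms by (auto intro!: eq_matI)

lemma Qk_carrier [simp]: "Qk n d k Q \<in> carrier_mat (n + d) (n + d)"
  and dim_row_Qk [simp]: "dim_row (Qk n d k Q) = n + d"
  and dim_col_Qk [simp]: "dim_col (Qk n d k Q) = n + d"
  by (simp_all add: Qk_def)

lemma index_Qk:
  "i < n + d \<Longrightarrow> j < n + d \<Longrightarrow> Qk n d k Q $$ (i, j) =
    (if (i = k - 1 \<or> n \<le> i) \<and> (j = k - 1 \<or> n \<le> j)
     then Q $$ (loc_idx n i, loc_idx n j) else if i = j then 1 else 0)"
  by (simp add: Qk_def)

lemma bij_betw_loc_idx:
  assumes "1 \<le> k" "k \<le> n"
  shows "bij_betw (loc_idx n) (insert (k - 1) {n..<n + d}) {0..<d + 1}"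
  by (rule bij_betw_byWitness[where f' = "\<lambda>p. if p = 0 then k - 1 else n + p - 1"])
    (use assms in \<open>auto simp: loc_idx_def\<close>)

lemma Qk_orthogonal:
  assumes "1 \<le> k" "k \<le> n" and "real_orthogonal (d + 1) Q"
  shows "transpose_mat (Qk n d k Q) * Qk n d k Q = 1\<^sub>m (n + d)"
proof (rule transpose_mult_self_block_embedding[where B = "insert (k - 1) {n..<n + d}" and f = "loc_idx n"])
  show "Q \<in> carrier_mat (d + 1) (d + 1)" "transpose_mat Q * Q = 1\<^sub>m (d + 1)"
    using assms(3) by (auto simp: real_orthogonal_def)
qed (use assms(1,2) bij_betw_loc_idx in \<open>auto simp: index_Qk\<close>)

lemma row_Qk_passive:
  "i < n \<Longrightarrow> i \<noteq> k - 1 \<Longrightarrow> row (Qk n d k Q) i = unit_vec (n + d) i"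
  by (rule eq_vecI) (auto simp: Qk_def)

lemma col_Qk_passive:
  "j < n \<Longrightarrow> j \<noteq> k - 1 \<Longrightarrow> col (Qk n d k Q) j = unit_vec (n + d) j"
  by (rule eq_vecI) (auto simp: Qk_def)

lemma Qprod_carrier [simp]: "Qprod n d Qt m \<in> carrier_mat (n + d) (n + d)"
  by (induction m) (auto intro!: mult_carrier_mat)

lemma Qprod_orthogonal:
  assumes "m \<le> n" and "\<And>k. 1 \<le> k \<Longrightarrow> k \<le> n \<Longrightarrow> real_orthogonal (d + 1) (Qt k)"
  shows "transpose_mat (Qprod n d Qt m) * Qprod n d Qt m = 1\<^sub>m (n + d)"
  using assms(1)
proof (induction m)
  case (Suc m)
  let ?K = "Qk n d (Suc m) (Qt (Suc m))"
  have "transpose_mat ?K * ?K = 1\<^sub>m (n + d)"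
    using Suc.prems assms(2) by (intro Qk_orthogonal) auto
  then show ?case
    using Suc by (simp add: transpose_mult_isometry[of _ "n + d" "n + d" _ "n + d"])
qed simp

lemma embed_mat_carrier [simp]: "embed_mat n d \<in> carrier_mat (n + d) n"
  by (simp add: embed_mat_def)

lemma dim_row_embed_mat [simp]: "dim_row (embed_mat n d) = n + d"
  and dim_col_embed_mat [simp]: "dim_col (embed_mat n d) = n"
  by (simp_all add: embed_mat_def append_rows_def)

lemma embed_mat_isometry: "transpose_mat (embed_mat n d) * embed_mat n d = 1\<^sub>m n"
  by (simp add: embed_mat_def transpose_append_rows_mult[of _ n n _ d])

lemma Qprod_embed_mat_carrier [simp]: "Qprod n d Qt m * embed_mat n d \<in> carrier_mat (n + d) n"
  by (rule mult_carrier_mat[of _ _ "n + d"]) simp_all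

lemma Qprod_Suc_embed_mat:
  "Qprod n d Qt (Suc m) * embed_mat n d
    = Qk n d (Suc m) (Qt (Suc m)) * (Qprod n d Qt m * embed_mat n d)"
  by (simp add: assoc_mult_mat[of _ "n + d" "n + d" _ "n + d" _ n])

lemma col_Qprod_embed_mat:
  "m \<le> j \<Longrightarrow> j < n \<Longrightarrow> col (Qprod n d Qt m * embed_mat n d) j = unit_vec (n + d) j"
proof (induction m)
  case 0
  then show ?case by (intro eq_vecI) (auto simp: embed_mat_def append_rows_def)
next
  case (Suc m)
  have "col (Qprod n d Qt (Suc m) * embed_mat n d) j = col (Qk n d (Suc m) (Qt (Suc m))) j"
    unfolding Qprod_Suc_embed_mat using Suc
    by (intro col_mult_unit_col[OF Qk_carrier Qprod_embed_mat_carrier]) auto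
  then show ?case
    using Suc.prems by (simp add: col_Qk_passive)
qed

lemma Qprod_embed_mat_upper_zero:
  "m \<le> n \<Longrightarrow> i < j \<Longrightarrow> j < n \<Longrightarrow> (Qprod n d Qt m * embed_mat n d) $$ (i, j) = 0"
proof (induction m)
  case 0
  then show ?case by (simp add: embed_mat_def append_rows_def)
next
  case (Suc m)
  let ?K = "Qk n d (Suc m) (Qt (Suc m))" and ?X = "Qprod n d Qt m * embed_mat n d"
  have X: "?X \<in> carrier_mat (n + d) n" by simp
  have "(?K * ?X) $$ (i, j) = 0"
  proof (cases "i = m")
    case True
    have "(?K * ?X) $$ (i, j) = col (?K * ?X) j $ i"
      using Suc.prems by simp
    also have "\<dots> = col ?K j $ i"
      using Suc.prems True
      by (subst col_mult_unit_col[OF Qk_carrier X]) (auto intro: col_Qprod_embed_mat)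
    also have "\<dots> = 0"
      using Suc.prems True by (simp add: index_Qk)
    finally show ?thesis .
  next
    case False
    then have "(?K * ?X) $$ (i, j) = ?X $$ (i, j)"
      using Suc.prems by (intro index_mult_unit_row[OF Qk_carrier X]) (auto simp: row_Qk_passive)
    then show ?thesis
      using Suc by simp
  qed
  then show ?case
    by (simp only: Qprod_Suc_embed_mat)
qed

lemma stacked_carrier: "stacked n d Qt \<in> carrier_mat (n + d) n"
  by (simp add: stacked_def)

lemma append_rows_C_of_A_of: "C_of n d Qt @\<^sub>r A_of n d Qt = stacked n d Qt"
  using stacked_carrier[of n d Qt]
  by (intro eq_matI) (auto simp: append_rows_def C_of_def A_of_def)

lemma stacked_isometry:
  assumes "\<And>k. 1 \<le> k \<Longrightarrow> k \<le> n \<Longrightarrow> real_orthogonal (d + 1) (Qt k)"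
  shows "transpose_mat (stacked n d Qt) * stacked n d Qt = 1\<^sub>m n"
  unfolding stacked_def using Qprod_orthogonal[OF le_refl assms]
  by (simp add: transpose_mult_isometry[of _ "n + d" "n + d" _ n] embed_mat_isometry)

lemma stacked_upper_zero: "i < j \<Longrightarrow> j < n \<Longrightarrow> stacked n d Qt $$ (i, j) = 0"
  unfolding stacked_def by (rule Qprod_embed_mat_upper_zero) auto

theorem corollary6p3:
  fixes n d :: nat and Qt :: "nat \<Rightarrow> real mat"
  assumes "1 \<le> d" and "d \<le> n"
    and "\<And>k. 1 \<le> k \<Longrightarrow> k \<le> n \<Longrightarrow> real_orthogonal (d + 1) (Qt k)"
  shows "OTSON n d (A_of n d Qt) (C_of n d Qt)"
proof -
  let ?A = "A_of n d Qt" and ?C = "C_of n d Qt"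
  have A: "?A \<in> carrier_mat n n" and C: "?C \<in> carrier_mat d n"
    by (simp_all add: A_of_def C_of_def)
  have "transpose_mat ?C * ?C + transpose_mat ?A * ?A = 1\<^sub>m n"
    using stacked_isometry[OF assms(3)]
    by (simp add: transpose_append_rows_mult[OF C A, symmetric] append_rows_C_of_A_of)
  then have gram: "transpose_mat ?A * ?A = 1\<^sub>m n - transpose_mat ?C * ?C"
    using A C by (intro add_eq_imp_eq_minus_mat[of _ n n]) auto
  have "(?C @\<^sub>r ?A) $$ (i, j) = 0" if "i < j" "j < n" for i j
    using that by (simp add: append_rows_C_of_A_of stacked_upper_zero)
  then show ?thesis
    using A C gram by (simp add: OTSON_def)
qed

end
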